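(* Let $\Lambda_{TU}=\{(F(x),\Lambda_x,v(x))\}_{x\in X}$ and $\Gamma_{TU}=\{(G(x),\Gamma_x,v(x))\}_{x\in X}$ be continuous $(T,U)$-controlled $g$-fusion frames for $H$ with bounds $A_1,B_1$ and $A_2,B_2$ and frame operators $S_C$ and $S_{C'}$ respectively, and assume $S_C^{-1}$ and $S_{C'}^{-1}$ each commute with both $T$ and $U$. Let $\Delta_{TU}=\{(X(x),\Delta_x,v(x))\}_{x\in X}$ with $X(x)=S_C^{-1}F(x)$, $\Delta_x=\Lambda_xP_{F(x)}S_C^{-1}$, and $\Theta_{TU}=\{(Y(x),\Theta_x,v(x))\}_{x\in X}$ with $Y(x)=S_{C'}^{-1}G(x)$, $\Theta_x=\Gamma_xP_{G(x)}S_{C'}^{-1}$, be their canonical duals. If there is $D>0$ such that for every $f\in H$ $$\Big|\int_X v(x)^2\big(\langle\Lambda_xP_{F(x)}Uf,\Lambda_xP_{F(x)}Tf\rangle-\langle\Gamma_xP_{G(x)}Uf,\Gamma_xP_{G(x)}Tf\rangle\big)\,d\mu(x)\Big|\le D\|f\|^2,$$ then for every $f\in H$ $$\Big|\int_X v(x)^2\big(\langle\Delta_xP_{X(x)}Uf,\Delta_xP_{X(x)}Tf\rangle-\langle\Theta_xP_{Y(x)}Uf,\Theta_xP_{Y(x)}Tf\rangle\big)\,d\mu(x)\Big|\le\frac{D}{A_1A_2}\|f\|^2.$$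
   Context: $H$ is a separable complex Hilbert space, $\mathcal{B}(H)$ the bounded operators on $H$, $\mathcal{GB}^+(H)$ the positive bounded operators on $H$ with bounded inverse, $P_M$ the orthogonal projection onto a closed subspace $M$. Let $(X,\mu)$ be a measure space, $\{K_x\}_{x\in X}$ Hilbert spaces, $v:X\to\mathbb{R}^+$ measurable, $F,G$ maps from $X$ to closed subspaces of $H$ with $x\mapsto P_{F(x)}f$, $x\mapsto P_{G(x)}f$ weakly measurable for all $f$, $\Lambda_x\in\mathcal{B}(F(x),K_x)$, $\Gamma_x\in\mathcal{B}(G(x),K_x)$, and $T,U\in\mathcal{GB}^+(H)$. A family $\{(F(x),\Lambda_x,v(x))\}$ is a continuous $(T,U)$-controlled $g$-fusion frame for $H$ with bounds $0<A\le B<\infty$ if $A\|f\|^2\le\int_X v(x)^2\langle\Lambda_xP_{F(x)}Uf,\Lambda_xP_{F(x)}Tf\rangle d\mu(x)\le B\|f\|^2$ for all $f\in H$. Its frame operator $S_C\in\mathcal{B}(H)$ is given by $\langle S_Cf,g\rangle=\int_X v(x)^2\langle T^*P_{F(x)}\Lambda_x^*\Lambda_xP_{F(x)}Uf,g\rangle d\mu(x)$; it satisfies $AI_H\le S_C\le BI_H$. The canonical dual of such a frame (when $S_C^{-1}$ commutes with $T$ and $U$) is the family $\{(S_C^{-1}F(x),\Lambda_xP_{F(x)}S_C^{-1},v(x))\}_{x\in X}$, the operator being restricted to $S_C^{-1}F(x)$. *)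

theory Defs
  imports "HOL-Analysis.Analysis"
begin

class complex_hilbert = banach +
  fixes scaleC :: "complex \<Rightarrow> 'a \<Rightarrow> 'a"
    and cinner :: "'a \<Rightarrow> 'a \<Rightarrow> complex"
  assumes scaleC_add_right: "scaleC c (x + y) = scaleC c x + scaleC c y"
    and scaleC_add_left: "scaleC (b + c) x = scaleC b x + scaleC c x"
    and scaleC_scaleC: "scaleC b (scaleC c x) = scaleC (b * c) x"
    and scaleC_one: "scaleC 1 x = x"
    and scaleC_of_real: "scaleC (complex_of_real r) x = scaleR r x"
    and cinner_add_left: "cinner (x + y) z = cinner x z + cinner y z"
    and cinner_scaleC_left: "cinner (scaleC c x) y = c * cinner x y"
    and cinner_commute: "cinner y x = cnj (cinner x y)"
    and cinner_self_real: "Im (cinner x x) = 0"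
    and cinner_self_nonneg: "0 \<le> Re (cinner x x)"
    and cinner_self_eq_0: "cinner x x = 0 \<longleftrightarrow> x = 0"
    and norm_eq_sqrt_cinner: "norm x = sqrt (Re (cinner x x))"

definition clinear :: "('a::complex_hilbert \<Rightarrow> 'b::complex_hilbert) \<Rightarrow> bool" where
  "clinear L \<longleftrightarrow> (\<forall>x y. L (x + y) = L x + L y) \<and> (\<forall>c x. L (scaleC c x) = scaleC c (L x))"

definition bounded_clinear :: "('a::complex_hilbert \<Rightarrow> 'b::complex_hilbert) \<Rightarrow> bool" where
  "bounded_clinear L \<longleftrightarrow> clinear L \<and> (\<exists>K. \<forall>x. norm (L x) \<le> norm x * K)"

text \<open>Bounded linear operator defined on a closed subspace \<open>M\<close> (only its values on \<open>M\<close> matter).\<close>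
definition bounded_clinear_on :: "'a::complex_hilbert set \<Rightarrow> ('a \<Rightarrow> 'b::complex_hilbert) \<Rightarrow> bool" where
  "bounded_clinear_on M L \<longleftrightarrow>
     (\<forall>x\<in>M. \<forall>y\<in>M. L (x + y) = L x + L y) \<and> (\<forall>c. \<forall>x\<in>M. L (scaleC c x) = scaleC c (L x)) \<and>
     (\<exists>K. \<forall>x\<in>M. norm (L x) \<le> norm x * K)"

definition closed_csubspace :: "'a::complex_hilbert set \<Rightarrow> bool" where
  "closed_csubspace M \<longleftrightarrow> closed M \<and> 0 \<in> M \<and> (\<forall>x\<in>M. \<forall>y\<in>M. x + y \<in> M) \<and>
     (\<forall>c. \<forall>x\<in>M. scaleC c x \<in> M)"

definition proj :: "'a::complex_hilbert set \<Rightarrow> 'a \<Rightarrow> 'a" where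
  "proj M f = (THE y. y \<in> M \<and> (\<forall>m\<in>M. cinner (f - y) m = 0))"

definition positive_op :: "('a::complex_hilbert \<Rightarrow> 'a) \<Rightarrow> bool" where
  "positive_op T \<longleftrightarrow> (\<forall>f. Im (cinner (T f) f) = 0 \<and> 0 \<le> Re (cinner (T f) f))"

definition GBplus :: "('a::complex_hilbert \<Rightarrow> 'a) \<Rightarrow> bool" where
  "GBplus T \<longleftrightarrow> bounded_clinear T \<and> positive_op T \<and> bij T \<and> bounded_clinear (inv T)"

definition separable_space :: "'a::complex_hilbert itself \<Rightarrow> bool" where
  "separable_space _ \<longleftrightarrow> (\<exists>D::'a set. countable D \<and> closure D = UNIV)"

definition gfusion_family ::
  "'x measure \<Rightarrow> ('x \<Rightarrow> real) \<Rightarrow> ('x \<Rightarrow> 'h::complex_hilbert set) \<Rightarrow> ('x \<Rightarrow> 'h \<Rightarrow> 'k::complex_hilbert) \<Rightarrow> bool"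
  where
  "gfusion_family M v F \<Lambda> \<longleftrightarrow>
     v \<in> borel_measurable M \<and> (\<forall>x\<in>space M. 0 < v x) \<and>
     (\<forall>x\<in>space M. closed_csubspace (F x)) \<and>
     (\<forall>f g. (\<lambda>x. cinner (proj (F x) f) g) \<in> borel_measurable M) \<and>
     (\<forall>x\<in>space M. bounded_clinear_on (F x) (\<Lambda> x))"

definition ctrl_gfusion_frame ::
  "'x measure \<Rightarrow> ('x \<Rightarrow> real) \<Rightarrow> ('x \<Rightarrow> 'h::complex_hilbert set) \<Rightarrow> ('x \<Rightarrow> 'h \<Rightarrow> 'k::complex_hilbert)
     \<Rightarrow> ('h \<Rightarrow> 'h) \<Rightarrow> ('h \<Rightarrow> 'h) \<Rightarrow> real \<Rightarrow> real \<Rightarrow> bool" where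
  "ctrl_gfusion_frame M v F \<Lambda> T U A B \<longleftrightarrow>
     0 < A \<and> A \<le> B \<and>
     (\<forall>f. let I = (\<lambda>x. complex_of_real ((v x)\<^sup>2) *
                        cinner (\<Lambda> x (proj (F x) (U f))) (\<Lambda> x (proj (F x) (T f))))
          in integrable M I \<and> Im (integral\<^sup>L M I) = 0 \<and>
             A * (norm f)\<^sup>2 \<le> Re (integral\<^sup>L M I) \<and> Re (integral\<^sup>L M I) \<le> B * (norm f)\<^sup>2)"

text \<open>Frame operator \<open>S_C\<close>: \<open>\<langle>S_C f, g\<rangle> = \<integral> v(x)\<^sup>2 \<langle>T\<^sup>* P_{F(x)} \<Lambda>_x\<^sup>* \<Lambda>_x P_{F(x)} U f, g\<rangle> d\<mu>(x)\<close>;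
  the integrand is written out as \<open>\<langle>\<Lambda>_x P_{F(x)} U f, \<Lambda>_x P_{F(x)} T g\<rangle>\<close>.\<close>
definition ctrl_frame_operator ::
  "'x measure \<Rightarrow> ('x \<Rightarrow> real) \<Rightarrow> ('x \<Rightarrow> 'h::complex_hilbert set) \<Rightarrow> ('x \<Rightarrow> 'h \<Rightarrow> 'k::complex_hilbert)
     \<Rightarrow> ('h \<Rightarrow> 'h) \<Rightarrow> ('h \<Rightarrow> 'h) \<Rightarrow> ('h \<Rightarrow> 'h) \<Rightarrow> bool" where
  "ctrl_frame_operator M v F \<Lambda> T U S \<longleftrightarrow>
     bounded_clinear S \<and>
     (\<forall>f g. cinner (S f) g =
        (LINT x|M. complex_of_real ((v x)\<^sup>2) *
           cinner (\<Lambda> x (proj (F x) (U f))) (\<Lambda> x (proj (F x) (T g)))))"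

end

theory Submission
  imports Defs
begin

text \<open>The lower frame bound makes each frame operator \<open>S\<close> a self-adjoint operator with
  \<open>\<langle>S f, f\<rangle> \<ge> A \<parallel>f\<parallel>\<^sup>2\<close>, hence invertible with \<open>\<parallel>S\<^sup>-\<^sup>1\<parallel> \<le> 1/A\<close>. Because \<open>S\<^sup>-\<^sup>1\<close> is self-adjoint,
  \<open>S\<^sup>-\<^sup>1\<close> maps \<open>(S\<^sup>-\<^sup>1F(x))\<^sup>\<bottom>\<close> into \<open>F(x)\<^sup>\<bottom>\<close>, so \<open>P\<^bsub>F(x)\<^esub> S\<^sup>-\<^sup>1 P\<^bsub>S\<^sup>-\<^sup>1F(x)\<^esub> = P\<^bsub>F(x)\<^esub> S\<^sup>-\<^sup>1\<close>; together with
  the commutation hypotheses the integral of the canonical dual at \<open>f\<close> is the integral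
  of the original frame at \<open>S\<^sup>-\<^sup>1f\<close>, namely \<open>\<langle>f, S\<^sup>-\<^sup>1f\<rangle>\<close>. The quantity to estimate is therefore
  \<open>\<langle>f, S\<^sup>-\<^sup>1f\<rangle> - \<langle>f, S'\<^sup>-\<^sup>1f\<rangle> = \<langle>(S - S') a, b\<rangle>\<close> with \<open>a = S\<^sup>-\<^sup>1f\<close>, \<open>b = S'\<^sup>-\<^sup>1f\<close>. The hypothesis bounds
  the Hermitian form of \<open>S - S'\<close> on the diagonal by \<open>D\<close>; by polarization it is bounded by
  \<open>D \<parallel>a\<parallel> \<parallel>b\<parallel> \<le> D \<parallel>f\<parallel>\<^sup>2 / (A\<^sub>1 A\<^sub>2)\<close>.\<close>

section \<open>Inner product calculus\<close>

lemma cinner_zero_left [simp]: "cinner 0 y = 0"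
  using cinner_add_left[of 0 0 y] by simp

lemma cinner_zero_right [simp]: "cinner x 0 = 0"
  using cinner_commute[of x 0] by simp

lemma cinner_add_right: "cinner x (y + z) = cinner x y + cinner x z"
  by (simp only: cinner_commute[of x] cinner_add_left complex_cnj_add)

lemma cinner_scaleC_right: "cinner x (scaleC c y) = cnj c * cinner x y"
  by (simp only: cinner_commute[of x] cinner_scaleC_left complex_cnj_mult)

lemma cinner_minus_left: "cinner (- x) y = - cinner x y"
proof -
  have "cinner x y + cinner (- x) y = 0" using cinner_add_left[of x "- x" y] by simp
  then show ?thesis by (rule minus_unique[symmetric])
qed

lemma cinner_minus_right: "cinner x (- y) = - cinner x y"
  by (simp only: cinner_commute[of x] cinner_minus_left complex_cnj_minus)

lemma cinner_diff_left: "cinner (x - y) z = cinner x z - cinner y z"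
  unfolding diff_conv_add_uminus cinner_add_left cinner_minus_left by simp

lemma cinner_diff_right: "cinner x (y - z) = cinner x y - cinner x z"
  unfolding diff_conv_add_uminus cinner_add_right cinner_minus_right by simp

lemma power2_norm_eq_cinner: "(norm x)\<^sup>2 = Re (cinner x x)"
  by (simp add: norm_eq_sqrt_cinner cinner_self_nonneg)

lemma cinner_self_eq_power2_norm: "cinner x x = of_real ((norm x)\<^sup>2)"
  by (simp add: power2_norm_eq_cinner complex_eq_iff cinner_self_real)

lemma cinner_diff_scaleC_self:
  "cinner (z - scaleC t m) (z - scaleC t m)
     = cinner z z - cnj t * cinner z m - t * cinner m z + t * cnj t * cinner m m"
  by (simp add: cinner_diff_left cinner_diff_right cinner_scaleC_left cinner_scaleC_right
      algebra_simps)

lemma power2_norm_diff_component: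
  assumes "m \<noteq> 0"
  shows "(norm (z - scaleC (cinner z m / cinner m m) m))\<^sup>2
           = (norm z)\<^sup>2 - (cmod (cinner z m))\<^sup>2 / (norm m)\<^sup>2"
proof -
  define c where "c = cinner z m"
  define n where "n = (norm m)\<^sup>2"
  have "n \<noteq> 0" using assms by (simp add: n_def)
  have mm: "cinner m m = of_real n" by (simp add: n_def cinner_self_eq_power2_norm)
  have mz: "cinner m z = cnj c" by (simp add: c_def cinner_commute[of m z])
  have "cinner (z - scaleC (c / of_real n) m) (z - scaleC (c / of_real n) m)
      = cinner z z - cnj (c / of_real n) * c - (c / of_real n) * cnj c
          + (c / of_real n) * cnj (c / of_real n) * of_real n"
    unfolding cinner_diff_scaleC_self mm mz c_def ..
  also have "\<dots> = cinner z z - cnj c * c / of_real n"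
  proof -
    have "cnj (c / of_real n) * of_real n = cnj c" using \<open>n \<noteq> 0\<close> by simp
    then show ?thesis by (simp add: algebra_simps)
  qed
  also have "\<dots> = cinner z z - of_real ((cmod c)\<^sup>2 / n)"
    using complex_norm_square[of c] by (simp add: mult.commute)
  finally have "(norm (z - scaleC (c / of_real n) m))\<^sup>2 = (norm z)\<^sup>2 - (cmod c)\<^sup>2 / n"
    by (simp add: power2_norm_eq_cinner)
  then show ?thesis unfolding c_def[symmetric] mm n_def[symmetric] .
qed

lemma norm_cinner_le: "cmod (cinner x y) \<le> norm x * norm y"
proof (cases "y = 0")
  case False
  then have "(cmod (cinner x y))\<^sup>2 / (norm y)\<^sup>2 \<le> (norm x)\<^sup>2"
    using power2_norm_diff_component[of y x] by (metis diff_ge_0_iff_ge zero_le_power2)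
  then have "(cmod (cinner x y))\<^sup>2 \<le> (norm x * norm y)\<^sup>2"
    using False by (simp add: divide_le_eq power_mult_distrib)
  then show ?thesis by (simp add: power2_le_iff_abs_le)
qed simp

lemma parallelogram_law:
  fixes a b :: "'a::complex_hilbert"
  shows "(norm (a + b))\<^sup>2 + (norm (a - b))\<^sup>2 = 2 * (norm a)\<^sup>2 + 2 * (norm b)\<^sup>2"
  by (simp add: power2_norm_eq_cinner cinner_add_left cinner_add_right
      cinner_diff_left cinner_diff_right)

section \<open>Orthogonal projections\<close>

lemma closed_csubspace_add: "closed_csubspace M \<Longrightarrow> x \<in> M \<Longrightarrow> y \<in> M \<Longrightarrow> x + y \<in> M"
  and closed_csubspace_scaleC: "closed_csubspace M \<Longrightarrow> x \<in> M \<Longrightarrow> scaleC c x \<in> M"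
  by (simp_all add: closed_csubspace_def)

lemma closed_csubspace_scaleR: "closed_csubspace M \<Longrightarrow> x \<in> M \<Longrightarrow> r *\<^sub>R x \<in> M"
  unfolding scaleC_of_real[symmetric] by (rule closed_csubspace_scaleC)

lemma closed_csubspace_diff:
  assumes "closed_csubspace M" "x \<in> M" "y \<in> M"
  shows "x - y \<in> M"
  using closed_csubspace_add[OF assms(1,2) closed_csubspace_scaleR[OF assms(1,3), of "- 1"]] by simp

lemma power2_norm_diff_le_midpoint:
  fixes f y z :: "'a::complex_hilbert"
  assumes "d \<le> (norm (f - (1/2) *\<^sub>R (y + z)))\<^sup>2"
  shows "(norm (y - z))\<^sup>2 \<le> 2 * (norm (f - y))\<^sup>2 + 2 * (norm (f - z))\<^sup>2 - 4 * d"
proof -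
  have "(f - y) + (f - z) = 2 *\<^sub>R (f - (1/2) *\<^sub>R (y + z))"
    by (simp add: scaleR_right_diff_distrib scaleR_2)
  then have "(norm ((f - y) + (f - z)))\<^sup>2 = 4 * (norm (f - (1/2) *\<^sub>R (y + z)))\<^sup>2"
    by (simp add: power2_eq_square)
  moreover have "(norm ((f - y) + (f - z)))\<^sup>2 + (norm (y - z))\<^sup>2
      = 2 * (norm (f - y))\<^sup>2 + 2 * (norm (f - z))\<^sup>2"
    using parallelogram_law[of "f - y" "f - z"] by (simp add: norm_minus_commute)
  ultimately show ?thesis using assms by linarith
qed

text \<open>A minimizing sequence is Cauchy by the parallelogram law, since the midpoint of two
  of its terms stays in \<open>M\<close>.\<close>

lemma closed_csubspace_nearest_point:
  fixes M :: "'a::complex_hilbert set"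
  assumes M: "closed_csubspace M"
  shows "\<exists>y\<in>M. \<forall>m\<in>M. (norm (f - y))\<^sup>2 \<le> (norm (f - m))\<^sup>2"
proof -
  define d where "d = Inf ((\<lambda>m. (norm (f - m))\<^sup>2) ` M)"
  have "0 \<in> M" using M by (simp add: closed_csubspace_def)
  have bdd: "bdd_below ((\<lambda>m. (norm (f - m))\<^sup>2) ` M)"
    by (rule bdd_belowI[of _ 0]) auto
  have d_le: "d \<le> (norm (f - m))\<^sup>2" if "m \<in> M" for m
    unfolding d_def using bdd that by (simp add: cInf_lower)
  have "\<exists>m\<in>M. (norm (f - m))\<^sup>2 < d + 1 / real (Suc n)" for n
    using cInf_lessD[of "(\<lambda>m. (norm (f - m))\<^sup>2) ` M" "d + 1 / real (Suc n)"] \<open>0 \<in> M\<close>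
    by (auto simp: d_def)
  then obtain s where s: "\<And>n. s n \<in> M" "\<And>n. (norm (f - s n))\<^sup>2 < d + 1 / real (Suc n)"
    by metis
  have s_close: "(norm (s n - s k))\<^sup>2 \<le> 2 / real (Suc n) + 2 / real (Suc k)" for n k
  proof -
    have "(1/2) *\<^sub>R (s n + s k) \<in> M"
      by (intro closed_csubspace_scaleR closed_csubspace_add M s)
    from power2_norm_diff_le_midpoint[OF d_le[OF this]] s(2)[of n] s(2)[of k]
    show ?thesis by linarith
  qed
  have "Cauchy s"
  proof (rule CauchyI)
    fix e :: real assume e: "0 < e"
    obtain N where N: "inverse (real (Suc N)) < e\<^sup>2 / 4"
      using reals_Archimedean[of "e\<^sup>2/4"] e by auto
    show "\<exists>N. \<forall>m\<ge>N. \<forall>n\<ge>N. norm (s m - s n) < e"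
    proof (intro exI allI impI)
      fix m n assume "N \<le> m" "N \<le> n"
      then have "2 / real (Suc m) \<le> 2 / real (Suc N)" "2 / real (Suc n) \<le> 2 / real (Suc N)"
        by (simp_all add: frac_le)
      moreover have "4 / real (Suc N) < e\<^sup>2" using N by (simp add: inverse_eq_divide field_simps)
      ultimately have "(norm (s m - s n))\<^sup>2 < e\<^sup>2" using s_close[of m n] by linarith
      then show "norm (s m - s n) < e" using e by (simp add: power_less_imp_less_base)
    qed
  qed
  then obtain y where y: "s \<longlonglongrightarrow> y" using Cauchy_convergent_iff convergent_def by blast
  have "y \<in> M"
    using closed_sequentially[OF _ s(1) y] M by (simp add: closed_csubspace_def)
  have dist_lim: "(\<lambda>n. (norm (f - s n))\<^sup>2) \<longlonglongrightarrow> (norm (f - y))\<^sup>2"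
    by (intro tendsto_intros y)
  have bound_lim: "(\<lambda>n. d + inverse (real (Suc n))) \<longlonglongrightarrow> d + 0"
    by (intro tendsto_intros LIMSEQ_inverse_real_of_nat)
  have "(norm (f - y))\<^sup>2 \<le> d"
    using tendsto_le[OF _ bound_lim dist_lim] s(2) by (simp add: less_imp_le inverse_eq_divide)
  then show ?thesis using \<open>y \<in> M\<close> d_le by (blast intro: order_trans)
qed

lemma closed_csubspace_orthogonal_decomposition:
  fixes M :: "'a::complex_hilbert set"
  assumes M: "closed_csubspace M"
  shows "\<exists>y\<in>M. \<forall>m\<in>M. cinner (f - y) m = 0"
proof -
  obtain y where "y \<in> M" and y_min: "\<forall>m\<in>M. (norm (f - y))\<^sup>2 \<le> (norm (f - m))\<^sup>2"
    using closed_csubspace_nearest_point[OF M] by blast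
  have "cinner (f - y) m = 0" if "m \<in> M" for m
  proof (cases "m = 0")
    case False
    define t where "t = cinner (f - y) m / cinner m m"
    have "y + scaleC t m \<in> M"
      by (intro closed_csubspace_add closed_csubspace_scaleC M \<open>y \<in> M\<close> \<open>m \<in> M\<close>)
    then have "(norm (f - y))\<^sup>2 \<le> (norm ((f - y) - scaleC t m))\<^sup>2"
      using y_min by (simp add: algebra_simps)
    then have "(cmod (cinner (f - y) m))\<^sup>2 / (norm m)\<^sup>2 \<le> 0"
      using power2_norm_diff_component[OF False, of "f - y"] by (simp add: t_def)
    then show ?thesis using False by (simp add: divide_le_0_iff)
  qed simp
  then show ?thesis using \<open>y \<in> M\<close> by blast
qed

lemma proj_eqI:
  fixes M :: "'a::complex_hilbert set"
  assumes M: "closed_csubspace M" and "y \<in> M" and orth: "\<forall>m\<in>M. cinner (f - y) m = 0"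
  shows "proj M f = y"
  unfolding proj_def
proof (rule the_equality)
  fix y' assume y': "y' \<in> M \<and> (\<forall>m\<in>M. cinner (f - y') m = 0)"
  then have "y' - y \<in> M" using \<open>y \<in> M\<close> M by (simp add: closed_csubspace_diff)
  then have "cinner (y' - y) (y' - y) = 0"
    using orth y' cinner_diff_left[of "f - y" "f - y'" "y' - y"] by simp
  then show "y' = y" by (simp add: cinner_self_eq_0)
qed (use assms in blast)

lemma proj_in_orthogonal:
  fixes M :: "'a::complex_hilbert set"
  assumes M: "closed_csubspace M"
  shows "proj M f \<in> M \<and> (\<forall>m\<in>M. cinner (f - proj M f) m = 0)"
proof -
  obtain y where "y \<in> M" "\<forall>m\<in>M. cinner (f - y) m = 0"
    using closed_csubspace_orthogonal_decomposition[OF M] by blast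
  moreover from this have "proj M f = y" by (rule proj_eqI[OF M])
  ultimately show ?thesis by simp
qed

lemma proj_in: "closed_csubspace M \<Longrightarrow> proj M f \<in> M"
  and proj_orthogonal: "closed_csubspace M \<Longrightarrow> m \<in> M \<Longrightarrow> cinner (f - proj M f) m = 0"
  using proj_in_orthogonal by blast+

section \<open>Coercive self-adjoint operators\<close>

lemma bounded_clinear_add: "bounded_clinear S \<Longrightarrow> S (x + y) = S x + S y"
  and bounded_clinear_scaleC: "bounded_clinear S \<Longrightarrow> S (scaleC c x) = scaleC c (S x)"
  by (simp_all add: bounded_clinear_def clinear_def)

lemma bounded_clinear_imp_bounded_linear:
  assumes "bounded_clinear S"
  shows "bounded_linear S"
proof -
  obtain K where "\<forall>x. norm (S x) \<le> norm x * K" using assms by (auto simp: bounded_clinear_def)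
  then show ?thesis
    using bounded_clinear_add[OF assms] bounded_clinear_scaleC[OF assms, of "of_real r" for r]
    by (intro bounded_linear_intro[of _ K]) (auto simp: scaleC_of_real)
qed

locale coercive_operator =
  fixes S :: "'a::complex_hilbert \<Rightarrow> 'a" and A :: real
  assumes bounded: "bounded_clinear S"
    and pos: "0 < A"
    and cinner_real: "Im (cinner (S f) f) = 0"
    and coercive: "A * (norm f)\<^sup>2 \<le> Re (cinner (S f) f)"
begin

lemma linear: "bounded_linear S"
  by (rule bounded_clinear_imp_bounded_linear[OF bounded])

lemma norm_lower_bound: "A * norm x \<le> norm (S x)"
proof (cases "x = 0")
  case False
  have "A * (norm x)\<^sup>2 \<le> Re (cinner (S x) x)" by (rule coercive)
  also have "\<dots> \<le> cmod (cinner (S x) x)" by (rule complex_Re_le_cmod)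
  also have "\<dots> \<le> norm (S x) * norm x" by (rule norm_cinner_le)
  finally show ?thesis using False by (simp add: power2_eq_square)
qed (simp add: linear_simps(3)[OF linear])

lemma inj: "inj S"
proof (rule injI)
  fix x y assume "S x = S y"
  then have "A * norm (x - y) \<le> 0"
    using norm_lower_bound[of "x - y"] by (simp add: linear_simps(2)[OF linear])
  then show "x = y" using pos by (simp add: mult_le_0_iff)
qed

text \<open>Use that \<open>\<langle>S h, h\<rangle>\<close> is real for \<open>h = f + g\<close> and \<open>h = f + i g\<close>.\<close>

lemma hermitian: "cinner (S f) g = cnj (cinner (S g) f)"
proof -
  define a b where "a = cinner (S f) g" and "b = cinner (S g) f"
  have "Im (cinner (S f) f + cinner (S g) g + a + b) = 0"
    using cinner_real[of "f + g"]
    by (simp add: a_def b_def bounded_clinear_add[OF bounded] cinner_add_left cinner_add_right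
        algebra_simps)
  then have "Im a + Im b = 0" using cinner_real[of f] cinner_real[of g] by simp
  moreover have "Im (cinner (S f) f + cinner (S g) g - \<i> * a + \<i> * b) = 0"
    using cinner_real[of "f + scaleC \<i> g"]
    by (simp add: a_def b_def bounded_clinear_add[OF bounded] bounded_clinear_scaleC[OF bounded]
        cinner_add_left cinner_add_right cinner_scaleC_left cinner_scaleC_right algebra_simps)
  then have "Re b - Re a = 0" using cinner_real[of f] cinner_real[of g] by simp
  ultimately show ?thesis by (simp add: a_def b_def complex_eq_iff)
qed

lemma closed_range: "closed (range S)"
  unfolding closed_sequential_limits
proof (intro allI impI)
  fix s l assume sl: "(\<forall>n. s n \<in> range S) \<and> s \<longlonglongrightarrow> l"
  then have "\<forall>n. \<exists>y. s n = S y" by blast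
  then obtain x where "\<forall>n. s n = S (x n)" by (rule choice[THEN exE])
  then have l: "(\<lambda>n. S (x n)) \<longlonglongrightarrow> l" using sl by (simp add: fun_eq_iff[symmetric])
  have "Cauchy x"
  proof (rule CauchyI)
    fix e :: real assume "0 < e"
    obtain N where N: "\<forall>m\<ge>N. \<forall>n\<ge>N. norm (S (x m) - S (x n)) < A * e"
      using CauchyD[OF LIMSEQ_imp_Cauchy[OF l], of "A * e"] \<open>0 < e\<close> pos by auto
    have "norm (x m - x n) < e" if "N \<le> m" "N \<le> n" for m n
    proof -
      have "norm (S (x m) - S (x n)) < A * e" using N that by blast
      then have "A * norm (x m - x n) < A * e"
        using norm_lower_bound[of "x m - x n"] by (simp add: linear_simps(2)[OF linear])
      then show ?thesis using pos by simp
    qed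
    then show "\<exists>N. \<forall>m\<ge>N. \<forall>n\<ge>N. norm (x m - x n) < e" by blast
  qed
  then obtain y where "x \<longlonglongrightarrow> y" using Cauchy_convergent_iff convergent_def by blast
  then have "(\<lambda>n. S (x n)) \<longlonglongrightarrow> S y" by (rule bounded_linear.tendsto[OF linear])
  with l show "l \<in> range S" using LIMSEQ_unique by blast
qed

lemma closed_csubspace_range: "closed_csubspace (range S)"
  unfolding closed_csubspace_def
proof (intro conjI ballI allI)
  show "0 \<in> range S" using linear_simps(3)[OF linear] by (metis rangeI)
  show "x + y \<in> range S" if "x \<in> range S" "y \<in> range S" for x y
    using that bounded_clinear_add[OF bounded, symmetric] by blast
  show "scaleC c x \<in> range S" if "x \<in> range S" for c x
    using that bounded_clinear_scaleC[OF bounded, symmetric] by blast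
qed (rule closed_range)

lemma surj: "surj S"
proof -
  have "g \<in> range S" for g
  proof -
    define p where "p = proj (range S) g"
    have "cinner (g - p) (S (g - p)) = 0"
      using proj_orthogonal[OF closed_csubspace_range] p_def by blast
    then have "A * (norm (g - p))\<^sup>2 \<le> 0"
      using coercive[of "g - p"] cinner_commute[of "S (g - p)" "g - p"] by simp
    then have "g = p" using pos by (simp add: mult_le_0_iff)
    moreover have "p \<in> range S" unfolding p_def by (rule proj_in[OF closed_csubspace_range])
    ultimately show ?thesis by simp
  qed
  then show ?thesis by auto
qed

lemma bij: "bij S"
  using inj surj by (simp add: bij_def)

lemma apply_inv [simp]: "S (inv S f) = f"
  using surj by (simp add: surj_f_inv_f)

lemma inv_apply [simp]: "inv S (S f) = f"
  using inj by simp

lemma norm_inv_le: "A * norm (inv S f) \<le> norm f"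
  using norm_lower_bound[of "inv S f"] by simp

lemma inv_diff: "inv S (g - h) = inv S g - inv S h"
proof -
  have "S (inv S g - inv S h) = g - h" by (simp add: linear_simps(2)[OF linear])
  then show ?thesis using inv_apply by metis
qed

lemma cinner_inv_left: "cinner (inv S a) b = cinner a (inv S b)"
proof -
  have "cinner a (inv S b) = cnj (cinner (S (inv S b)) (inv S a))"
    using hermitian[of "inv S a" "inv S b"] by simp
  also have "\<dots> = cinner (inv S a) b" using cinner_commute[of "inv S a" b] by simp
  finally show ?thesis by simp
qed

lemma closed_csubspace_inv_image:
  assumes N: "closed_csubspace N"
  shows "closed_csubspace (inv S ` N)"
proof -
  have "inv S ` N = S -` N" by (rule bij_vimage_eq_inv_image[OF bij, symmetric])
  moreover have "closed_csubspace (S -` N)"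
    unfolding closed_csubspace_def
  proof (intro conjI ballI allI)
    show "closed (S -` N)"
      using N by (intro continuous_closed_vimage linear_continuous_at linear)
        (simp add: closed_csubspace_def)
    show "0 \<in> S -` N" using N linear_simps(3)[OF linear] by (simp add: closed_csubspace_def)
    show "x + y \<in> S -` N" if "x \<in> S -` N" "y \<in> S -` N" for x y
      using that N bounded_clinear_add[OF bounded] by (simp add: closed_csubspace_add)
    show "scaleC c x \<in> S -` N" if "x \<in> S -` N" for c x
      using that N bounded_clinear_scaleC[OF bounded] by (simp add: closed_csubspace_scaleC)
  qed
  ultimately show ?thesis by simp
qed

lemma proj_inv_proj_inv_image:
  assumes N: "closed_csubspace N"
  shows "proj N (inv S (proj (inv S ` N) g)) = proj N (inv S g)"
proof (rule proj_eqI[OF N proj_in[OF N]], intro ballI)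
  fix m assume "m \<in> N"
  have "cinner (inv S (proj (inv S ` N) g) - proj N (inv S g)) m
      = cinner (inv S g - proj N (inv S g)) m - cinner (g - proj (inv S ` N) g) (inv S m)"
    by (simp add: inv_diff cinner_diff_left cinner_inv_left[symmetric])
  also have "\<dots> = 0"
    using \<open>m \<in> N\<close> proj_orthogonal[OF N] proj_orthogonal[OF closed_csubspace_inv_image[OF N]]
    by simp
  finally show "cinner (inv S (proj (inv S ` N) g) - proj N (inv S g)) m = 0" .
qed

end

section \<open>Hermitian forms\<close>

definition hermitian_form :: "('a::complex_hilbert \<Rightarrow> 'a \<Rightarrow> complex) \<Rightarrow> bool" where
  "hermitian_form B \<longleftrightarrow> (\<forall>x y z. B (x + y) z = B x z + B y z) \<and>
     (\<forall>c x y. B (scaleC c x) y = c * B x y) \<and> (\<forall>x y. cnj (B x y) = B y x)"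

lemma hermitian_form_diff:
  "hermitian_form B \<Longrightarrow> hermitian_form B' \<Longrightarrow> hermitian_form (\<lambda>x y. B x y - B' x y)"
  by (simp add: hermitian_form_def algebra_simps)

lemma (in coercive_operator) hermitian_form: "hermitian_form (\<lambda>x y. cinner (S x) y)"
  unfolding hermitian_form_def
  by (simp add: bounded_clinear_add[OF bounded] bounded_clinear_scaleC[OF bounded]
      cinner_add_left cinner_scaleC_left hermitian[symmetric])

context
  fixes B :: "'a::complex_hilbert \<Rightarrow> 'a \<Rightarrow> complex"
  assumes B: "hermitian_form B"
begin

lemma hermitian_form_add_left: "B (x + y) z = B x z + B y z"
  and hermitian_form_scaleC_left: "B (scaleC c x) y = c * B x y"
  and hermitian_form_commute: "B x y = cnj (B y x)"
  using B unfolding hermitian_form_def by simp_all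

lemma hermitian_form_add_right: "B x (y + z) = B x y + B x z"
  by (simp only: hermitian_form_commute[of x] hermitian_form_add_left complex_cnj_add)

lemma hermitian_form_scaleR_left: "B (r *\<^sub>R x) y = of_real r * B x y"
  using hermitian_form_scaleC_left[of "of_real r" x y] by (simp only: scaleC_of_real)

lemma hermitian_form_scaleR_right: "B x (r *\<^sub>R y) = of_real r * B x y"
  by (simp only: hermitian_form_commute[of x] hermitian_form_scaleR_left complex_cnj_mult
      complex_cnj_complex_of_real)

lemma hermitian_form_diff_left: "B (x - y) z = B x z - B y z"
  and hermitian_form_diff_right: "B x (y - z) = B x y - B x z"
  using hermitian_form_scaleR_left[of "- 1" y z] hermitian_form_scaleR_right[of x "- 1" z]
  by (simp_all add: diff_conv_add_uminus hermitian_form_add_left hermitian_form_add_right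
      del: add_uminus_conv_diff)

lemma hermitian_form_polarization:
  "B (x + y) (x + y) - B (x - y) (x - y) = 4 * of_real (Re (B x y))"
proof -
  have "B (x + y) (x + y) = B x x + B x y + B y x + B y y"
    by (simp add: hermitian_form_add_left hermitian_form_add_right)
  moreover have "B (x - y) (x - y) = B x x - B x y - B y x + B y y"
    by (simp add: hermitian_form_diff_left hermitian_form_diff_right)
  moreover have "B x y + B y x = of_real (2 * Re (B x y))"
    using hermitian_form_commute[of y x] by (simp add: complex_add_cnj)
  ultimately show ?thesis by (simp add: algebra_simps)
qed

text \<open>Rotating \<open>a\<close> by the phase of \<open>B a b\<close> and balancing the norms of the two arguments
  turns the polarization estimate of \<open>Re B\<close> into the estimate of \<open>|B|\<close>.\<close>

lemma hermitian_form_Re_bound: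
  assumes diag: "\<And>x. cmod (B x x) \<le> D * (norm x)\<^sup>2"
  shows "2 * Re (B x y) \<le> D * ((norm x)\<^sup>2 + (norm y)\<^sup>2)"
proof -
  have "4 * Re (B x y) = Re (B (x + y) (x + y)) - Re (B (x - y) (x - y))"
    using arg_cong[OF hermitian_form_polarization[of x y], of Re] by simp
  also have "\<dots> \<le> D * (norm (x + y))\<^sup>2 + D * (norm (x - y))\<^sup>2"
    using diag[of "x + y"] diag[of "x - y"] complex_Re_le_cmod[of "B (x + y) (x + y)"]
      abs_Re_le_cmod[of "B (x - y) (x - y)"] by linarith
  also have "\<dots> = 2 * (D * ((norm x)\<^sup>2 + (norm y)\<^sup>2))"
    unfolding distrib_left[symmetric] parallelogram_law by (simp add: algebra_simps)
  finally show ?thesis by linarith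
qed

lemma hermitian_form_bound:
  assumes "0 \<le> D" and diag: "\<And>x. cmod (B x x) \<le> D * (norm x)\<^sup>2"
  shows "cmod (B a b) \<le> D * norm a * norm b"
proof (cases "a = 0 \<or> b = 0 \<or> B a b = 0")
  case True
  have "B 0 b = 0" "B a 0 = 0"
    using hermitian_form_scaleR_left[of 0 a b] hermitian_form_scaleR_right[of a 0 b] by simp_all
  with True show ?thesis using \<open>0 \<le> D\<close> by auto
next
  case False
  define c where "c = B a b"
  define w where "w = cnj c / of_real (cmod c)"
  have wc: "w * c = of_real (cmod c)" and ww: "w * cnj w = 1"
    unfolding w_def using False c_def
    by (simp_all add: complex_norm_square[symmetric] power2_eq_square field_simps)
  have "(norm (scaleC w a))\<^sup>2 = Re (w * cnj w * cinner a a)"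
    unfolding power2_norm_eq_cinner cinner_scaleC_left cinner_scaleC_right
    by (simp only: mult.assoc mult.left_commute)
  then have norm_wa: "norm (scaleC w a) = norm a"
    using ww by (simp add: power2_norm_eq_cinner[symmetric] power2_eq_iff_nonneg)
  define x y where "x = norm b *\<^sub>R scaleC w a" and "y = norm a *\<^sub>R b"
  have "B x y = of_real (norm b * norm a * cmod c)"
    unfolding x_def y_def
    by (simp add: hermitian_form_scaleR_left hermitian_form_scaleR_right
        hermitian_form_scaleC_left c_def[symmetric] wc)
  then have "2 * (norm b * norm a * cmod c) \<le> D * ((norm x)\<^sup>2 + (norm y)\<^sup>2)"
    using hermitian_form_Re_bound[OF diag, of x y] by simp
  also have "(norm x)\<^sup>2 + (norm y)\<^sup>2 = 2 * (norm a * norm b) * (norm a * norm b)"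
    unfolding x_def y_def by (simp add: norm_wa power2_eq_square)
  finally have "(norm a * norm b) * cmod c \<le> (norm a * norm b) * (D * norm a * norm b)"
    by (simp add: algebra_simps)
  then show ?thesis using False by (simp add: c_def mult_le_cancel_left_pos)
qed

end

lemma cinner_inv_diff_bound:
  fixes S S' :: "'a::complex_hilbert \<Rightarrow> 'a"
  assumes S: "coercive_operator S A" and S': "coercive_operator S' A'" and "0 \<le> D"
    and diag: "\<And>x. cmod (cinner (S x) x - cinner (S' x) x) \<le> D * (norm x)\<^sup>2"
  shows "cmod (cinner f (inv S f) - cinner f (inv S' f)) \<le> D / (A * A') * (norm f)\<^sup>2"
proof -
  interpret S: coercive_operator S A by (rule S)
  interpret S': coercive_operator S' A' by (rule S')
  define a b where "a = inv S f" and "b = inv S' f"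
  have "cinner f a = cinner (S' a) b"
    using S.cinner_inv_left[of f f] S'.hermitian[of a b] cinner_commute[of a f]
    by (simp add: a_def b_def)
  moreover have "cinner f b = cinner (S a) b" by (simp add: a_def)
  ultimately have "cmod (cinner f a - cinner f b) = cmod (cinner (S a) b - cinner (S' a) b)"
    by (simp add: norm_minus_commute)
  also have "\<dots> \<le> D * norm a * norm b"
    using hermitian_form_bound[OF hermitian_form_diff[OF S.hermitian_form S'.hermitian_form]]
      \<open>0 \<le> D\<close> diag by blast
  also have "\<dots> \<le> D * (norm f / A) * (norm f / A')"
  proof -
    have "norm a \<le> norm f / A" "norm b \<le> norm f / A'"
      using S.norm_inv_le[of f] S'.norm_inv_le[of f] S.pos S'.pos
      by (simp_all add: a_def b_def field_simps)
    then have "norm a * norm b \<le> (norm f / A) * (norm f / A')"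
      using S.pos by (intro mult_mono) auto
    then show ?thesis using \<open>0 \<le> D\<close> unfolding mult.assoc by (rule mult_left_mono)
  qed
  finally show ?thesis by (simp add: a_def b_def power2_eq_square)
qed

section \<open>Controlled g-fusion frames\<close>

lemma ctrl_gfusion_frame_integrable:
  assumes "ctrl_gfusion_frame M v F \<Lambda> T U A B"
  shows "integrable M (\<lambda>x. complex_of_real ((v x)\<^sup>2) *
           cinner (\<Lambda> x (proj (F x) (U f))) (\<Lambda> x (proj (F x) (T f))))"
  using assms unfolding ctrl_gfusion_frame_def Let_def by blast

lemma ctrl_frame_operator_cinner_self:
  assumes "ctrl_frame_operator M v F \<Lambda> T U S"
  shows "cinner (S f) f = (LINT x|M. complex_of_real ((v x)\<^sup>2) *
           cinner (\<Lambda> x (proj (F x) (U f))) (\<Lambda> x (proj (F x) (T f))))"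
  using assms by (simp add: ctrl_frame_operator_def)

lemma ctrl_frame_operator_coercive:
  assumes frame: "ctrl_gfusion_frame M v F \<Lambda> T U A B"
    and op: "ctrl_frame_operator M v F \<Lambda> T U S"
  shows "coercive_operator S A"
proof
  show "bounded_clinear S" using op by (simp add: ctrl_frame_operator_def)
  show "0 < A" using frame by (simp add: ctrl_gfusion_frame_def)
  show "Im (cinner (S f) f) = 0" "A * (norm f)\<^sup>2 \<le> Re (cinner (S f) f)" for f
    using frame unfolding ctrl_frame_operator_cinner_self[OF op] ctrl_gfusion_frame_def Let_def
    by blast+
qed

lemma canonical_dual_proj:
  assumes fam: "gfusion_family M v F \<Lambda>" and S: "coercive_operator S A"
    and comm: "inv S \<circ> W = W \<circ> inv S" and "x \<in> space M"
  shows "proj (F x) (inv S (proj (inv S ` F x) (W f))) = proj (F x) (W (inv S f))"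
proof -
  have "closed_csubspace (F x)" using fam \<open>x \<in> space M\<close> by (simp add: gfusion_family_def)
  then show ?thesis
    using coercive_operator.proj_inv_proj_inv_image[OF S] fun_cong[OF comm, of f] by simp
qed

lemma canonical_dual_integrable:
  assumes fam: "gfusion_family M v F \<Lambda>" and frame: "ctrl_gfusion_frame M v F \<Lambda> T U A B"
    and op: "ctrl_frame_operator M v F \<Lambda> T U S"
    and comm: "inv S \<circ> T = T \<circ> inv S" "inv S \<circ> U = U \<circ> inv S"
  shows "integrable M (\<lambda>x. complex_of_real ((v x)\<^sup>2) *
           cinner (\<Lambda> x (proj (F x) (inv S (proj (inv S ` F x) (U f)))))
                  (\<Lambda> x (proj (F x) (inv S (proj (inv S ` F x) (T f))))))"
proof -
  have S: "coercive_operator S A" by (rule ctrl_frame_operator_coercive[OF frame op])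
  show ?thesis
    using ctrl_gfusion_frame_integrable[OF frame, of "inv S f"]
    by (simp add: canonical_dual_proj[OF fam S comm(1)] canonical_dual_proj[OF fam S comm(2)]
        cong: Bochner_Integration.integrable_cong)
qed

lemma canonical_dual_integral:
  assumes fam: "gfusion_family M v F \<Lambda>" and frame: "ctrl_gfusion_frame M v F \<Lambda> T U A B"
    and op: "ctrl_frame_operator M v F \<Lambda> T U S"
    and comm: "inv S \<circ> T = T \<circ> inv S" "inv S \<circ> U = U \<circ> inv S"
  shows "(LINT x|M. complex_of_real ((v x)\<^sup>2) *
           cinner (\<Lambda> x (proj (F x) (inv S (proj (inv S ` F x) (U f)))))
                  (\<Lambda> x (proj (F x) (inv S (proj (inv S ` F x) (T f))))))
         = cinner f (inv S f)"
proof -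
  have S: "coercive_operator S A" by (rule ctrl_frame_operator_coercive[OF frame op])
  show ?thesis
    using ctrl_frame_operator_cinner_self[OF op, of "inv S f"]
    by (simp add: canonical_dual_proj[OF fam S comm(1)] canonical_dual_proj[OF fam S comm(2)]
        coercive_operator.apply_inv[OF S] cong: Bochner_Integration.integral_cong)
qed

lemma integral_weighted_diff:
  fixes w :: "'x \<Rightarrow> real" and a b :: "'x \<Rightarrow> complex"
  assumes "integrable M (\<lambda>x. complex_of_real (w x) * a x)"
    and "integrable M (\<lambda>x. complex_of_real (w x) * b x)"
  shows "(LINT x|M. complex_of_real (w x) * (a x - b x))
       = (LINT x|M. complex_of_real (w x) * a x) - (LINT x|M. complex_of_real (w x) * b x)"
  using Bochner_Integration.integral_diff[OF assms] by (simp add: right_diff_distrib)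

theorem theorem4p2:
  fixes M :: "'x measure" and v :: "'x \<Rightarrow> real"
    and F G :: "'x \<Rightarrow> 'h::complex_hilbert set"
    and \<Lambda> \<Gamma> :: "'x \<Rightarrow> 'h \<Rightarrow> 'k::complex_hilbert"
    and T U SC SC' :: "'h \<Rightarrow> 'h"
    and A1 B1 A2 B2 D :: real
  assumes sep: "separable_space TYPE('h)"
    and TU: "GBplus T" "GBplus U"
    and famF: "gfusion_family M v F \<Lambda>"
    and famG: "gfusion_family M v G \<Gamma>"
    and frameF: "ctrl_gfusion_frame M v F \<Lambda> T U A1 B1"
    and frameG: "ctrl_gfusion_frame M v G \<Gamma> T U A2 B2"
    and opF: "ctrl_frame_operator M v F \<Lambda> T U SC"
    and opG: "ctrl_frame_operator M v G \<Gamma> T U SC'"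
    and commF: "inv SC \<circ> T = T \<circ> inv SC" "inv SC \<circ> U = U \<circ> inv SC"
    and commG: "inv SC' \<circ> T = T \<circ> inv SC'" "inv SC' \<circ> U = U \<circ> inv SC'"
    and Dpos: "0 < D"
    and hyp: "\<And>f. cmod (LINT x|M. complex_of_real ((v x)\<^sup>2) *
                 (cinner (\<Lambda> x (proj (F x) (U f))) (\<Lambda> x (proj (F x) (T f)))
                  - cinner (\<Gamma> x (proj (G x) (U f))) (\<Gamma> x (proj (G x) (T f)))))
               \<le> D * (norm f)\<^sup>2"
  shows "\<And>f. cmod (LINT x|M. complex_of_real ((v x)\<^sup>2) *
                 (cinner (\<Lambda> x (proj (F x) (inv SC (proj (inv SC ` F x) (U f)))))
                         (\<Lambda> x (proj (F x) (inv SC (proj (inv SC ` F x) (T f)))))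
                  - cinner (\<Gamma> x (proj (G x) (inv SC' (proj (inv SC' ` G x) (U f)))))
                         (\<Gamma> x (proj (G x) (inv SC' (proj (inv SC' ` G x) (T f)))))))
               \<le> D / (A1 * A2) * (norm f)\<^sup>2"
proof -
  have SC: "coercive_operator SC A1" and SC': "coercive_operator SC' A2"
    using ctrl_frame_operator_coercive[OF frameF opF] ctrl_frame_operator_coercive[OF frameG opG] .
  have diag: "cmod (cinner (SC g) g - cinner (SC' g) g) \<le> D * (norm g)\<^sup>2" for g
    using hyp[of g]
    unfolding integral_weighted_diff[OF ctrl_gfusion_frame_integrable[OF frameF]
        ctrl_gfusion_frame_integrable[OF frameG]]
      ctrl_frame_operator_cinner_self[OF opF] ctrl_frame_operator_cinner_self[OF opG] .
  show "?thesis f" for f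
    unfolding integral_weighted_diff[OF canonical_dual_integrable[OF famF frameF opF commF]
        canonical_dual_integrable[OF famG frameG opG commG]]
      canonical_dual_integral[OF famF frameF opF commF]
      canonical_dual_integral[OF famG frameG opG commG]
    by (rule cinner_inv_diff_bound[OF SC SC' less_imp_le[OF Dpos] diag])
qed

end
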